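(* Let $X$ and $Y$ be independent real random variables with $X \in \mathcal{D}^-$ and $Y \in \mathcal{D}^-$, and let $\phi:\mathbb{R}^2\to\mathbb{R}$ be increasing (componentwise non-decreasing) and convex. Then $\phi(X,Y)\in\mathcal{D}^-$.
   Context: For real random variables, $X \le_{st} Y$ means $P(X\le t)\ge P(Y\le t)$ for all $t\in\mathbb{R}$. A real random variable $X$ (equivalently its distribution function $F_X$) belongs to $\mathcal{D}^-$ if for every $n\in\mathbb{N}$, all $\theta_1,\dots,\theta_n\ge 0$ with $\sum_{i=1}^n\theta_i=1$, and i.i.d. random variables $X_1,\dots,X_n$ with distribution $F_X$, we have $X_1\le_{st}\sum_{i=1}^n\theta_iX_i$. *)

theory Defs
  imports "HOL-Probability.Probability"
begin

text \<open>Class D^-: a distribution F on the reals belongs to D^- if for every n,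
  all nonnegative weights theta_0..theta_(n-1) summing to 1 and i.i.d. X_0..X_(n-1)
  with law F (realised canonically on the product space PiM {..<n} (\<lambda>_. F)),
  X_0 is stochastically dominated by the weighted sum, i.e.
  P(X_0 \<le> t) \<ge> P(sum theta_i X_i \<le> t) for all real t.
  Since X_0 has law F, P(X_0 \<le> t) = measure F {..t}.\<close>

definition Dminus :: "real measure \<Rightarrow> bool" where
  "Dminus F \<longleftrightarrow>
     (\<forall>(n::nat) (\<theta>::nat \<Rightarrow> real).
        (\<forall>i<n. 0 \<le> \<theta> i) \<and> (\<Sum>i<n. \<theta> i) = 1 \<longrightarrow>
        (\<forall>t::real.
           measure (PiM {..<n} (\<lambda>_. F))
             {x \<in> space (PiM {..<n} (\<lambda>_. F)). (\<Sum>i<n. \<theta> i * x i) \<le> t}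
           \<le> measure F {..t}))"

end

theory Submission
  imports Defs
begin

text \<open>Realise \<open>\<phi>(X,Y)\<close> canonically, so that i.i.d. copies are \<open>Z\<^sub>i = \<phi>(U\<^sub>i, V\<^sub>i)\<close> with
  \<open>U\<^sub>1, \<dots>, U\<^sub>n\<close> i.i.d. like \<open>X\<close>, \<open>V\<^sub>1, \<dots>, V\<^sub>n\<close> i.i.d. like \<open>Y\<close>, all independent.
  By Jensen, \<open>\<Sum>\<theta>\<^sub>i Z\<^sub>i \<ge> \<phi>(\<Sum>\<theta>\<^sub>i U\<^sub>i, \<Sum>\<theta>\<^sub>i V\<^sub>i)\<close>.  For fixed \<open>b\<close> the set \<open>{a. \<phi>(a,b) \<le> t}\<close>
  is a closed lower set, i.e. a half-line \<open>{..c}\<close>, \<open>\<emptyset>\<close> or \<open>\<real>\<close>, on which the defining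
  inequality of \<open>\<D>\<^sup>-\<close> applies; so by Fubini \<open>\<Sum>\<theta>\<^sub>i U\<^sub>i\<close> may be replaced by \<open>X\<close>, and then
  likewise \<open>\<Sum>\<theta>\<^sub>i V\<^sub>i\<close> by \<open>Y\<close>, each time increasing the probability of \<open>{\<dots> \<le> t}\<close>.\<close>

lemma prod_indicator_eq_if:
  assumes "finite I"
  shows "(\<Prod>i\<in>I. indicator (A i) (g i) :: 'b::comm_semiring_1) =
           (if \<forall>i\<in>I. g i \<in> A i then 1 else 0)"
  using assms by (auto intro!: prod_zero simp: indicator_def)

lemma distr_PiM_pair_measure:
  fixes M :: "'i \<Rightarrow> 'a measure" and N :: "'i \<Rightarrow> 'b measure"
  assumes "finite I" and M: "\<And>i. prob_space (M i)" and N: "\<And>i. prob_space (N i)"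
  shows "distr (PiM I M \<Otimes>\<^sub>M PiM I N) (PiM I (\<lambda>i. M i \<Otimes>\<^sub>M N i))
           (\<lambda>(u, v). \<lambda>i\<in>I. (u i, v i)) = PiM I (\<lambda>i. M i \<Otimes>\<^sub>M N i)"
    (is "distr ?P ?PMN ?zip = _")
proof -
  interpret PM: product_prob_space M by (simp add: product_prob_spaceI M)
  interpret PN: product_prob_space N by (simp add: product_prob_spaceI N)
  interpret PMN: product_prob_space "\<lambda>i. M i \<Otimes>\<^sub>M N i"
    by (intro product_prob_spaceI prob_space_pair M N)
  have sf_PiM_N: "sigma_finite_measure (PiM I N)"
    by (intro prob_space_imp_sigma_finite prob_space_PiM N)
  have [measurable]: "?zip \<in> measurable ?P ?PMN" by measurable
  show ?thesis
  proof (rule PMN.PiM_eqI[OF \<open>finite I\<close>])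
    fix A assume A: "\<And>i. i \<in> I \<Longrightarrow> A i \<in> sets (M i \<Otimes>\<^sub>M N i)"
    have [measurable]: "Pi\<^sub>E I A \<in> sets ?PMN" using A \<open>finite I\<close> by (simp add: sets_PiM_I_finite)
    let ?f = "\<lambda>i x y. indicator (A i) (x, y) :: ennreal"
    have f[measurable]: "(\<lambda>(x, y). ?f i x y) \<in> borel_measurable (M i \<Otimes>\<^sub>M N i)" if "i \<in> I" for i
      using A[OF that] by (simp add: split_beta')
    have f_section: "?f i x \<in> borel_measurable (N i)" if "i \<in> I" "x \<in> space (M i)" for i x
      using measurable_Pair2[OF f[OF that(1)] that(2)] by simp
    have "emeasure (distr ?P ?PMN ?zip) (Pi\<^sub>E I A) = (\<integral>\<^sup>+w. indicator (?zip -` Pi\<^sub>E I A \<inter> space ?P) w \<partial>?P)"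
      by (simp add: emeasure_distr)
    also have "\<dots> = (\<integral>\<^sup>+w. (\<Prod>i\<in>I. ?f i (fst w i) (snd w i)) \<partial>?P)"
      by (intro nn_integral_cong)
        (use \<open>finite I\<close> in \<open>auto simp: prod_indicator_eq_if space_pair_measure indicator_def PiE_iff\<close>)
    also have "\<dots> = (\<integral>\<^sup>+u. \<integral>\<^sup>+v. (\<Prod>i\<in>I. ?f i (u i) (v i)) \<partial>PiM I N \<partial>PiM I M)"
    proof -
      have "(\<lambda>w. \<Prod>i\<in>I. ?f i (fst w i) (snd w i)) \<in> borel_measurable ?P"
        using A by measurable
      from sigma_finite_measure.nn_integral_fst[OF sf_PiM_N this] show ?thesis by simp
    qed
    also have "\<dots> = (\<integral>\<^sup>+u. (\<Prod>i\<in>I. \<integral>\<^sup>+y. ?f i (u i) y \<partial>N i) \<partial>PiM I M)"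
      by (intro nn_integral_cong PN.product_nn_integral_prod[OF \<open>finite I\<close>])
        (auto simp: space_PiM intro: f_section)
    also have "\<dots> = (\<Prod>i\<in>I. \<integral>\<^sup>+x. \<integral>\<^sup>+y. ?f i x y \<partial>N i \<partial>M i)"
      using A by (intro PM.product_nn_integral_prod[OF \<open>finite I\<close>]) measurable
    also have "\<dots> = (\<Prod>i\<in>I. emeasure (M i \<Otimes>\<^sub>M N i) (A i))"
    proof (rule prod.cong[OF refl])
      fix i assume "i \<in> I"
      show "(\<integral>\<^sup>+x. \<integral>\<^sup>+y. ?f i x y \<partial>N i \<partial>M i) = emeasure (M i \<Otimes>\<^sub>M N i) (A i)"
        using sigma_finite_measure.nn_integral_fst[OF prob_space_imp_sigma_finite[OF N] f[OF \<open>i \<in> I\<close>]] A[OF \<open>i \<in> I\<close>] by simp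
    qed
    finally show "emeasure (distr ?P ?PMN ?zip) (Pi\<^sub>E I A) = (\<Prod>i\<in>I. emeasure (M i \<Otimes>\<^sub>M N i) (A i))" .
  qed simp
qed

lemma distr_PiM_pair_measure_map:
  fixes M :: "'i \<Rightarrow> 'a measure" and N :: "'i \<Rightarrow> 'b measure" and K :: "'c measure"
  assumes "finite I" and M: "\<And>i. prob_space (M i)" and N: "\<And>i. prob_space (N i)"
    and f: "\<And>i. f \<in> measurable (M i \<Otimes>\<^sub>M N i) K"
  defines "L \<equiv> \<lambda>i. distr (M i \<Otimes>\<^sub>M N i) K f"
  shows "distr (PiM I M \<Otimes>\<^sub>M PiM I N) (PiM I L) (\<lambda>(u, v). \<lambda>i\<in>I. f (u i, v i)) = PiM I L"
proof -
  have fL[measurable]: "f \<in> measurable (M i \<Otimes>\<^sub>M N i) (L i)" for i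
    using f by (simp add: L_def)
  have [measurable]: "compose I f \<in> measurable (PiM I (\<lambda>i. M i \<Otimes>\<^sub>M N i)) (PiM I L)"
    unfolding compose_def by measurable
  have L: "prob_space (L i)" for i
    unfolding L_def by (intro prob_space.prob_space_distr prob_space_pair M N f)
  have "distr (PiM I M \<Otimes>\<^sub>M PiM I N) (PiM I L) (\<lambda>(u, v). \<lambda>i\<in>I. f (u i, v i)) =
      distr (distr (PiM I M \<Otimes>\<^sub>M PiM I N) (PiM I (\<lambda>i. M i \<Otimes>\<^sub>M N i)) (\<lambda>(u, v). \<lambda>i\<in>I. (u i, v i)))
        (PiM I L) (compose I f)"
    by (subst distr_distr) (auto simp: compose_def split_beta' intro!: distr_cong)
  also have "\<dots> = distr (PiM I (\<lambda>i. M i \<Otimes>\<^sub>M N i)) (PiM I L) (compose I f)"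
    by (simp add: distr_PiM_pair_measure \<open>finite I\<close> M N)
  also have "\<dots> = PiM I (\<lambda>i. distr (M i \<Otimes>\<^sub>M N i) (L i) f)"
    by (intro distr_PiM_finite_prob_space' \<open>finite I\<close> prob_space_pair M N L fL)
  also have "\<dots> = PiM I L"
    by (intro PiM_cong refl) (simp add: L_def cong: distr_cong)
  finally show ?thesis .
qed

lemma convex_on_pair_sum:
  fixes \<phi> :: "'a::real_vector \<times> 'b::real_vector \<Rightarrow> real"
  assumes "convex_on UNIV \<phi>" and "finite S" "S \<noteq> {}"
    and "\<And>i. i \<in> S \<Longrightarrow> 0 \<le> \<theta> i" "sum \<theta> S = 1"
  shows "\<phi> (\<Sum>i\<in>S. \<theta> i *\<^sub>R u i, \<Sum>i\<in>S. \<theta> i *\<^sub>R v i) \<le> (\<Sum>i\<in>S. \<theta> i * \<phi> (u i, v i))"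
proof -
  have "(\<Sum>i\<in>S. \<theta> i *\<^sub>R (u i, v i)) = (\<Sum>i\<in>S. \<theta> i *\<^sub>R u i, \<Sum>i\<in>S. \<theta> i *\<^sub>R v i)"
    by (simp add: prod_eq_iff fst_sum snd_sum)
  with convex_on_sum[OF assms(2,3,1,5,4), of "\<lambda>i. (u i, v i)"] show ?thesis by simp
qed

lemma closed_lower_set_real_cases:
  fixes D :: "real set"
  assumes "closed D" and lower: "\<And>x y. x \<in> D \<Longrightarrow> y \<le> x \<Longrightarrow> y \<in> D"
  obtains "D = {}" | "D = UNIV" | c where "D = {..c}"
proof (cases "D = {} \<or> \<not> bdd_above D")
  case True
  then consider "D = {}" | "\<not> bdd_above D" by blast
  then show ?thesis
  proof cases
    case 2
    then have "y \<in> D" for y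
      using lower by (metis bdd_aboveI linorder_le_cases)
    then show ?thesis using that by blast
  qed (use that in blast)
next
  case False
  then have "Sup D \<in> D" by (intro closed_contains_Sup \<open>closed D\<close>) auto
  then have "D = {..Sup D}"
    using False lower by (auto intro: cSup_upper)
  then show ?thesis using that by blast
qed

lemma Dminus_emeasure_closed_lower_set:
  fixes F :: "real measure" and D :: "real set" and n :: nat
  assumes "Dminus F" "prob_space F" "sets F = sets borel"
    and "\<forall>i<n. 0 \<le> \<theta> i" "(\<Sum>i<n. \<theta> i) = 1"
    and "closed D" "\<And>x y. x \<in> D \<Longrightarrow> y \<le> x \<Longrightarrow> y \<in> D"
  shows "emeasure (PiM {..<n} (\<lambda>_. F))
           {u \<in> space (PiM {..<n} (\<lambda>_. F)). (\<Sum>i<n. \<theta> i * u i) \<in> D} \<le> emeasure F D"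
proof -
  interpret F: prob_space F by fact
  interpret Q: prob_space "PiM {..<n} (\<lambda>_. F)" by (intro prob_space_PiM) (use assms(2) in auto)
  have "space F = UNIV" using sets_eq_imp_space_eq[OF assms(3)] by simp
  show ?thesis
  proof (rule closed_lower_set_real_cases[OF assms(6,7)])
    assume "D = {}"
    then show ?thesis by simp
  next
    assume "D = UNIV"
    then show ?thesis using Q.emeasure_le_1 F.emeasure_space_1 \<open>space F = UNIV\<close> by simp
  next
    fix c assume D: "D = {..c}"
    have "measure (PiM {..<n} (\<lambda>_. F)) {u \<in> space (PiM {..<n} (\<lambda>_. F)). (\<Sum>i<n. \<theta> i * u i) \<le> c}
        \<le> measure F {..c}"
      using assms(1)[unfolded Dminus_def, rule_format, of n \<theta> c] assms(4,5) by blast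
    then show ?thesis
      by (simp add: D Q.emeasure_eq_measure F.emeasure_eq_measure ennreal_leI)
  qed
qed

lemma emeasure_pair_measure_Collect_mono_fst:
  assumes "sigma_finite_measure M" "sigma_finite_measure M'" "sigma_finite_measure N"
    and "{w \<in> space (M \<Otimes>\<^sub>M N). P (fst w) (snd w)} \<in> sets (M \<Otimes>\<^sub>M N)"
    and "{w \<in> space (M' \<Otimes>\<^sub>M N). Q (fst w) (snd w)} \<in> sets (M' \<Otimes>\<^sub>M N)"
    and "\<And>y. y \<in> space N \<Longrightarrow> emeasure M {x \<in> space M. P x y} \<le> emeasure M' {x \<in> space M'. Q x y}"
  shows "emeasure (M \<Otimes>\<^sub>M N) {w \<in> space (M \<Otimes>\<^sub>M N). P (fst w) (snd w)}
           \<le> emeasure (M' \<Otimes>\<^sub>M N) {w \<in> space (M' \<Otimes>\<^sub>M N). Q (fst w) (snd w)}"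
proof -
  interpret MN: pair_sigma_finite M N by (intro pair_sigma_finite.intro assms)
  interpret M'N: pair_sigma_finite M' N by (intro pair_sigma_finite.intro assms)
  have slice: "(\<lambda>x. (x, y)) -` {w \<in> space (K \<Otimes>\<^sub>M N). R (fst w) (snd w)} = {x \<in> space K. R x y}"
    if "y \<in> space N" for K R y
    using that by (auto simp: space_pair_measure)
  show ?thesis
    unfolding MN.emeasure_pair_measure_alt2[OF assms(4)] M'N.emeasure_pair_measure_alt2[OF assms(5)]
    by (intro nn_integral_mono) (simp only: slice assms(6))
qed

lemma emeasure_pair_measure_Collect_mono_snd:
  assumes "sigma_finite_measure M" "sigma_finite_measure M'"
    and "{w \<in> space (N \<Otimes>\<^sub>M M). P (fst w) (snd w)} \<in> sets (N \<Otimes>\<^sub>M M)"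
    and "{w \<in> space (N \<Otimes>\<^sub>M M'). Q (fst w) (snd w)} \<in> sets (N \<Otimes>\<^sub>M M')"
    and "\<And>x. x \<in> space N \<Longrightarrow> emeasure M {y \<in> space M. P x y} \<le> emeasure M' {y \<in> space M'. Q x y}"
  shows "emeasure (N \<Otimes>\<^sub>M M) {w \<in> space (N \<Otimes>\<^sub>M M). P (fst w) (snd w)}
           \<le> emeasure (N \<Otimes>\<^sub>M M') {w \<in> space (N \<Otimes>\<^sub>M M'). Q (fst w) (snd w)}"
proof -
  have slice: "Pair x -` {w \<in> space (N \<Otimes>\<^sub>M K). R (fst w) (snd w)} = {y \<in> space K. R x y}"
    if "x \<in> space N" for K R x
    using that by (auto simp: space_pair_measure)
  show ?thesis
    unfolding sigma_finite_measure.emeasure_pair_measure_alt[OF assms(1,3)]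
      sigma_finite_measure.emeasure_pair_measure_alt[OF assms(2,4)]
    by (intro nn_integral_mono) (simp only: slice assms(5))
qed

lemma borel_measurable_convex_on_pair:
  fixes \<phi> :: "real \<times> real \<Rightarrow> real"
  assumes "convex_on UNIV \<phi>" and "sets M = sets borel" "sets N = sets borel"
  shows "\<phi> \<in> borel_measurable (M \<Otimes>\<^sub>M N)"
  using convex_on_continuous[OF open_UNIV assms(1)]
  by (simp add: measurable_cong_sets[OF sets_pair_measure_cong[OF assms(2,3)] refl]
      borel_prod borel_measurable_continuous_onI)

lemma (in prob_space) distr_indep_var_pair_map:
  assumes "indep_var S X T Y" and [measurable]: "f \<in> measurable (S \<Otimes>\<^sub>M T) N"
  shows "distr M N (\<lambda>\<omega>. f (X \<omega>, Y \<omega>)) = distr (distr M S X \<Otimes>\<^sub>M distr M T Y) N f"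
proof -
  from assms(1) have [measurable]: "X \<in> measurable M S" "Y \<in> measurable M T"
    and joint: "distr M S X \<Otimes>\<^sub>M distr M T Y = distr M (S \<Otimes>\<^sub>M T) (\<lambda>\<omega>. (X \<omega>, Y \<omega>))"
    by (simp_all add: indep_var_distribution_eq)
  show ?thesis
    unfolding joint by (subst distr_distr) (auto simp: comp_def)
qed

lemma emeasure_PiM_distr_weighted_sum_le:
  fixes FX FY :: "real measure" and \<phi> :: "real \<times> real \<Rightarrow> real" and n :: nat
  assumes pX: "prob_space FX" and pY: "prob_space FY"
    and sX[measurable_cong]: "sets FX = sets borel" and sY[measurable_cong]: "sets FY = sets borel"
    and conv: "convex_on UNIV \<phi>"
    and \<theta>_nonneg: "\<forall>i<n. 0 \<le> \<theta> i" and \<theta>_sum: "(\<Sum>i<n. \<theta> i) = 1"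
  defines "FZ \<equiv> distr (FX \<Otimes>\<^sub>M FY) borel \<phi>"
    and "P \<equiv> PiM {..<n} (\<lambda>_. FX) \<Otimes>\<^sub>M PiM {..<n} (\<lambda>_. FY)"
  shows "emeasure (PiM {..<n} (\<lambda>_. FZ)) {z \<in> space (PiM {..<n} (\<lambda>_. FZ)). (\<Sum>i<n. \<theta> i * z i) \<le> t}
    \<le> emeasure P {w \<in> space P. \<phi> (\<Sum>i<n. \<theta> i * fst w i, \<Sum>i<n. \<theta> i * snd w i) \<le> t}"
proof -
  let ?PZ = "PiM {..<n} (\<lambda>_. FZ)"
  let ?S = "{z \<in> space ?PZ. (\<Sum>i<n. \<theta> i * z i) \<le> t}"
  let ?\<Psi> = "\<lambda>(u, v). \<lambda>i\<in>{..<n}. \<phi> (u i, v i)"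
  have [measurable]: "\<phi> \<in> borel_measurable (borel \<Otimes>\<^sub>M borel)" "\<phi> \<in> borel_measurable (FX \<Otimes>\<^sub>M FY)"
    by (intro borel_measurable_convex_on_pair[OF conv] sX sY refl)+
  have [measurable_cong]: "sets FZ = sets borel" by (simp add: FZ_def)
  have [measurable]: "?\<Psi> \<in> measurable P ?PZ" "?S \<in> sets ?PZ"
    unfolding P_def FZ_def by measurable
  have "distr P ?PZ ?\<Psi> = ?PZ"
    unfolding FZ_def P_def by (rule distr_PiM_pair_measure_map) (use pX pY in auto)
  then have "emeasure ?PZ ?S = emeasure P (?\<Psi> -` ?S \<inter> space P)"
    by (metis emeasure_distr[of ?\<Psi> P ?PZ ?S] measurable)
  also have "?\<Psi> -` ?S \<inter> space P = {w \<in> space P. (\<Sum>i<n. \<theta> i * \<phi> (fst w i, snd w i)) \<le> t}"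
    by (auto simp: split_beta' space_pair_measure space_PiM FZ_def)
  also have "emeasure P \<dots>
      \<le> emeasure P {w \<in> space P. \<phi> (\<Sum>i<n. \<theta> i * fst w i, \<Sum>i<n. \<theta> i * snd w i) \<le> t}"
  proof (rule emeasure_mono)
    have "{..<n} \<noteq> {}" using \<theta>_sum by auto
    then have "\<phi> (\<Sum>i<n. \<theta> i * u i, \<Sum>i<n. \<theta> i * v i) \<le> (\<Sum>i<n. \<theta> i * \<phi> (u i, v i))" for u v
      using convex_on_pair_sum[OF conv finite_lessThan] \<theta>_nonneg \<theta>_sum by simp
    then show "{w \<in> space P. (\<Sum>i<n. \<theta> i * \<phi> (fst w i, snd w i)) \<le> t}
        \<subseteq> {w \<in> space P. \<phi> (\<Sum>i<n. \<theta> i * fst w i, \<Sum>i<n. \<theta> i * snd w i) \<le> t}"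
      by (auto intro: order_trans)
  qed (unfold P_def, measurable)
  finally show ?thesis .
qed

lemma Dminus_emeasure_pair_weighted_sum_le:
  fixes FX FY :: "real measure" and \<phi> :: "real \<times> real \<Rightarrow> real" and n :: nat
  assumes pX: "prob_space FX" and pY: "prob_space FY"
    and sX[measurable_cong]: "sets FX = sets borel" and sY[measurable_cong]: "sets FY = sets borel"
    and DX: "Dminus FX" and DY: "Dminus FY"
    and mono: "\<And>a b c d. a \<le> c \<Longrightarrow> b \<le> d \<Longrightarrow> \<phi> (a, b) \<le> \<phi> (c, d)"
    and cont: "continuous_on UNIV \<phi>"
    and \<theta>_nonneg: "\<forall>i<n. 0 \<le> \<theta> i" and \<theta>_sum: "(\<Sum>i<n. \<theta> i) = 1"
  defines "PX \<equiv> PiM {..<n} (\<lambda>_. FX)" and "PY \<equiv> PiM {..<n} (\<lambda>_. FY)"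
  shows "emeasure (PX \<Otimes>\<^sub>M PY) {w \<in> space (PX \<Otimes>\<^sub>M PY). \<phi> (\<Sum>i<n. \<theta> i * fst w i, \<Sum>i<n. \<theta> i * snd w i) \<le> t}
    \<le> emeasure (FX \<Otimes>\<^sub>M FY) {w \<in> space (FX \<Otimes>\<^sub>M FY). \<phi> (fst w, snd w) \<le> t}"
proof -
  define s where "s u = (\<Sum>i<n. \<theta> i * u i)" for u :: "nat \<Rightarrow> real"
  have [measurable]: "\<phi> \<in> borel_measurable (borel \<Otimes>\<^sub>M borel)"
    by (simp add: borel_prod borel_measurable_continuous_onI cont)
  then have [measurable]: "\<phi> \<in> borel_measurable (FX \<Otimes>\<^sub>M FY)"
    by (simp add: measurable_cong_sets[OF sets_pair_measure_cong[OF sX sY] refl])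
  have [measurable]: "s \<in> borel_measurable PX" "s \<in> borel_measurable PY"
    unfolding s_def PX_def PY_def by measurable
  have sf: "sigma_finite_measure FX" "sigma_finite_measure FY"
    "sigma_finite_measure PX" "sigma_finite_measure PY"
    unfolding PX_def PY_def using pX pY by (auto intro: prob_space_imp_sigma_finite prob_space_PiM)
  have closed_slice: "closed {a. \<phi> (a, b) \<le> t}" "closed {b. \<phi> (a, b) \<le> t}" for a b
    by (intro closed_Collect_le continuous_on_const continuous_on_compose2[OF cont]
        continuous_intros; simp)+
  have lower_slice_fst: "y \<in> {a. \<phi> (a, b) \<le> t}" if "x \<in> {a. \<phi> (a, b) \<le> t}" "y \<le> x" for b x y
    using that mono[of y x b b] by auto
  have lower_slice_snd: "y \<in> {b. \<phi> (a, b) \<le> t}" if "x \<in> {b. \<phi> (a, b) \<le> t}" "y \<le> x" for a x y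
    using that mono[of a a y x] by auto
  have "Measurable.pred (PX \<Otimes>\<^sub>M PY) (\<lambda>w. \<phi> (s (fst w), s (snd w)) \<le> t)"
    by measurable
  moreover have "Measurable.pred (FX \<Otimes>\<^sub>M PY) (\<lambda>w. \<phi> (fst w, s (snd w)) \<le> t)"
    by measurable
  moreover have "Measurable.pred (FX \<Otimes>\<^sub>M FY) (\<lambda>w. \<phi> (fst w, snd w) \<le> t)"
    unfolding prod.collapse by measurable
  ultimately have pred_sets: "{w \<in> space (PX \<Otimes>\<^sub>M PY). \<phi> (s (fst w), s (snd w)) \<le> t} \<in> sets (PX \<Otimes>\<^sub>M PY)"
    "{w \<in> space (FX \<Otimes>\<^sub>M PY). \<phi> (fst w, s (snd w)) \<le> t} \<in> sets (FX \<Otimes>\<^sub>M PY)"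
    "{w \<in> space (FX \<Otimes>\<^sub>M FY). \<phi> (fst w, snd w) \<le> t} \<in> sets (FX \<Otimes>\<^sub>M FY)"
    by (simp_all add: Measurable.pred_def)
  have "emeasure (PX \<Otimes>\<^sub>M PY) {w \<in> space (PX \<Otimes>\<^sub>M PY). \<phi> (s (fst w), s (snd w)) \<le> t}
      \<le> emeasure (FX \<Otimes>\<^sub>M PY) {w \<in> space (FX \<Otimes>\<^sub>M PY). \<phi> (fst w, s (snd w)) \<le> t}"
  proof (rule emeasure_pair_measure_Collect_mono_fst[OF sf(3,1,4) pred_sets(1,2)])
    fix v
    show "emeasure PX {u \<in> space PX. \<phi> (s u, s v) \<le> t} \<le> emeasure FX {a \<in> space FX. \<phi> (a, s v) \<le> t}"
      using Dminus_emeasure_closed_lower_set[OF DX pX sX \<theta>_nonneg \<theta>_sum closed_slice(1) lower_slice_fst]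
      by (simp add: sets_eq_imp_space_eq[OF sX] s_def PX_def)
  qed
  also have "\<dots> \<le> emeasure (FX \<Otimes>\<^sub>M FY) {w \<in> space (FX \<Otimes>\<^sub>M FY). \<phi> (fst w, snd w) \<le> t}"
  proof (rule emeasure_pair_measure_Collect_mono_snd[OF sf(4,2) pred_sets(2,3)])
    fix a
    show "emeasure PY {v \<in> space PY. \<phi> (a, s v) \<le> t} \<le> emeasure FY {b \<in> space FY. \<phi> (a, b) \<le> t}"
      using Dminus_emeasure_closed_lower_set[OF DY pY sY \<theta>_nonneg \<theta>_sum closed_slice(2) lower_slice_snd]
      by (simp add: sets_eq_imp_space_eq[OF sY] s_def PY_def)
  qed
  finally show ?thesis by (simp add: s_def)
qed

lemma Dminus_distr_pair_measure:
  fixes FX FY :: "real measure" and \<phi> :: "real \<times> real \<Rightarrow> real"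
  assumes pX: "prob_space FX" and pY: "prob_space FY"
    and sX: "sets FX = sets borel" and sY: "sets FY = sets borel"
    and DX: "Dminus FX" and DY: "Dminus FY"
    and mono: "\<And>a b c d. a \<le> c \<Longrightarrow> b \<le> d \<Longrightarrow> \<phi> (a, b) \<le> \<phi> (c, d)"
    and conv: "convex_on UNIV \<phi>"
  shows "Dminus (distr (FX \<Otimes>\<^sub>M FY) borel \<phi>)"
  unfolding Dminus_def
proof (intro allI impI, elim conjE)
  fix n :: nat and \<theta> :: "nat \<Rightarrow> real" and t :: real
  assume \<theta>: "\<forall>i<n. 0 \<le> \<theta> i" "(\<Sum>i<n. \<theta> i) = 1"
  define FZ where "FZ = distr (FX \<Otimes>\<^sub>M FY) borel \<phi>"
  have [measurable]: "\<phi> \<in> borel_measurable (FX \<Otimes>\<^sub>M FY)"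
    by (rule borel_measurable_convex_on_pair[OF conv sX sY])
  interpret Z: prob_space FZ
    unfolding FZ_def by (intro prob_space.prob_space_distr prob_space_pair pX pY) simp
  interpret PZ: prob_space "PiM {..<n} (\<lambda>_. FZ)"
    by (intro prob_space_PiM) (simp add: Z.prob_space_axioms)
  have "emeasure (PiM {..<n} (\<lambda>_. FZ)) {z \<in> space (PiM {..<n} (\<lambda>_. FZ)). (\<Sum>i<n. \<theta> i * z i) \<le> t}
      \<le> emeasure (FX \<Otimes>\<^sub>M FY) {w \<in> space (FX \<Otimes>\<^sub>M FY). \<phi> (fst w, snd w) \<le> t}"
    unfolding FZ_def
    using emeasure_PiM_distr_weighted_sum_le[OF pX pY sX sY conv \<theta>]
      Dminus_emeasure_pair_weighted_sum_le[OF pX pY sX sY DX DY mono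
        convex_on_continuous[OF open_UNIV conv] \<theta>]
    by (rule order_trans)
  also have "\<dots> = emeasure FZ {..t}"
    by (auto simp: FZ_def emeasure_distr intro!: arg_cong[where f = "emeasure _"])
  finally show "measure (PiM {..<n} (\<lambda>_. FZ)) {z \<in> space (PiM {..<n} (\<lambda>_. FZ)). (\<Sum>i<n. \<theta> i * z i) \<le> t}
      \<le> measure FZ {..t}"
    by (simp add: PZ.emeasure_eq_measure Z.emeasure_eq_measure)
qed

theorem theorem1:
  fixes M :: "'a measure" and X Y :: "'a \<Rightarrow> real" and \<phi> :: "real \<times> real \<Rightarrow> real"
  assumes "prob_space M"
    and "X \<in> borel_measurable M" and "Y \<in> borel_measurable M"
    and "prob_space.indep_var M borel X borel Y"
    and "Dminus (distr M borel X)" and "Dminus (distr M borel Y)"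
    and "\<And>a b c d. a \<le> c \<Longrightarrow> b \<le> d \<Longrightarrow> \<phi> (a, b) \<le> \<phi> (c, d)"
    and "convex_on UNIV \<phi>"
  shows "Dminus (distr M borel (\<lambda>\<omega>. \<phi> (X \<omega>, Y \<omega>)))"
proof -
  interpret M: prob_space M by fact
  have "distr M borel (\<lambda>\<omega>. \<phi> (X \<omega>, Y \<omega>)) = distr (distr M borel X \<Otimes>\<^sub>M distr M borel Y) borel \<phi>"
    using assms(4) borel_measurable_convex_on_pair[OF assms(8) refl refl]
    by (rule M.distr_indep_var_pair_map)
  also have "Dminus \<dots>"
    using assms(2,3,5-8) by (intro Dminus_distr_pair_measure M.prob_space_distr) auto
  finally show ?thesis .
qed

end
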